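(* Let $m\ge 1$, $C>0$, let $\mathbf{y}\in\{-1,1\}^m$, let $\mathbf{Q}\in\mathbb{R}^{m\times m}$ be a symmetric positive semidefinite kernel matrix on the labeled nodes and let $Q_{t1},\dots,Q_{tm}\in\mathbb{R}$ be the kernel values between a test node $t$ and the labeled nodes. Let $\boldsymbol{\alpha}^*\in\mathcal{S}(\mathbf{y})$ and $\hat p_t=\sum_{i=1}^m y_i\alpha_i^*Q_{ti}$, and assume $\hat p_t\neq 0$. For $i\in[m]$ set $M_{u_i}=\sum_{j=1}^m C|Q_{ij}|-1$ and $M_{v_i}=\sum_{j=1}^m C|Q_{ij}|+1$. Consider the mixed-integer linear program $$P(\mathbf{y}):\ \min\ \operatorname{sign}(\hat p_t)\sum_{i=1}^m z_iQ_{ti}$$ over $\boldsymbol{\alpha},\tilde{\mathbf{y}},\mathbf{z},\mathbf{u},\mathbf{v}\in\mathbb{R}^m$, $\mathbf{y}',\mathbf{s},\mathbf{t}\in\{0,1\}^m$, $\mathbf{R}\in\mathbb{R}^{m\times m}$, subject to: $\sum_{i=1}^m(1-y_i\tilde y_i)\le 2\lfloor\epsilon m\rfloor$; and for all $i,j\in[m]$: $\tilde y_i=2y'_i-1$; $\sum_{j=1}^m R_{ij}Q_{ij}-1-u_i+v_i=0$; $u_i\ge0$, $v_i\ge 0$; $-C(1+\tilde y_i)\le R_{ij}+z_j\le C(1+\tilde y_i)$; $-C(1-\tilde y_i)\le R_{ij}-z_j\le C(1-\tilde y_i)$; $-\alpha_i\le z_i\le\alpha_i$; $\alpha_i-C(1-\tilde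 y_i)\le z_i\le C(1+\tilde y_i)-\alpha_i$; $u_i\le M_{u_i}s_i$; $\alpha_i\le C(1-s_i)$; $v_i\le M_{v_i}t_i$; $\alpha_i\ge Ct_i$. Then the prediction for node $t$ is certifiably robust against $\mathcal{A}(\mathbf{y})$ if the optimal value of $P(\mathbf{y})$ is greater than zero, and it is not certifiably robust otherwise. Equivalently, the optimal value of $P(\mathbf{y})$ equals $\min\{\operatorname{sign}(\hat p_t)\sum_{i=1}^m\tilde y_i\alpha_iQ_{ti} : \tilde{\mathbf{y}}\in\mathcal{A}(\mathbf{y}),\ \boldsymbol{\alpha}\in\mathcal{S}(\tilde{\mathbf{y}})\}$.
   Context: Binary classification with $m$ labeled nodes. For a label vector $\tilde{\mathbf{y}}\in\{-1,1\}^m$, the (bias-free) kernel SVM dual problem is $D(\tilde{\mathbf{y}}):\ \min_{\boldsymbol\alpha\in\mathbb{R}^m}-\sum_{i=1}^m\alpha_i+\tfrac12\sum_{i,j=1}^m\tilde y_i\tilde y_j\alpha_i\alpha_jQ_{ij}$ subject to $0\le\alpha_i\le C$ for all $i\in[m]$; $\mathcal{S}(\tilde{\mathbf{y}})$ denotes its set of optimal solutions. Given $\boldsymbol\alpha\in\mathcal{S}(\tilde{\mathbf{y}})$, the SVM's prediction score for a node $t$ is $p_t=\sum_{i=1}^m\tilde y_i\alpha_iQ_{ti}$ and its predicted class is $\operatorname{sign}(p_t)$. The adversary with budget $\epsilon\in[0,1]$ may choose any $\tilde{\mathbf{y}}\in\mathcal{A}(\mathbf{y})=\{\tilde{\mathbf{y}}\in\{-1,1\}^m:\|\tilde{\mathbf{y}}-\mathbf{y}\|_0\le\lfloor\epsilon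 m\rfloor\}$. The prediction for $t$ is certifiably robust if $\operatorname{sign}(\hat p_t)\,p_t>0$ for every $\tilde{\mathbf{y}}\in\mathcal{A}(\mathbf{y})$ and every $\boldsymbol\alpha\in\mathcal{S}(\tilde{\mathbf{y}})$ (a score of $0$ counts as a changed prediction). When $\mathbf{Q}$ is the neural tangent kernel of a network, this SVM coincides with the infinite-width network trained with soft-margin (hinge) loss and regularization constant $C$. *)

theory Defs
  imports Complex_Main
begin

text \<open>Labeled nodes are indexed by a finite type 'i, so m = CARD('i) \<ge> 1.
  Label vectors are real-valued functions with values in {-1,1}.\<close>

definition is_label_vec :: "('i::finite \<Rightarrow> real) \<Rightarrow> bool" where
  "is_label_vec y \<longleftrightarrow> (\<forall>i. y i = -1 \<or> y i = 1)"

definition is_binary_vec :: "('i::finite \<Rightarrow> real) \<Rightarrow> bool" where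
  "is_binary_vec b \<longleftrightarrow> (\<forall>i. b i = 0 \<or> b i = 1)"

definition adv_set :: "real \<Rightarrow> ('i::finite \<Rightarrow> real) \<Rightarrow> ('i \<Rightarrow> real) set" where
  "adv_set eps y = {yt. is_label_vec yt \<and>
      int (card {i. yt i \<noteq> y i}) \<le> \<lfloor>eps * real (card (UNIV :: 'i set))\<rfloor>}"

definition svm_dual_obj :: "('i::finite \<Rightarrow> 'i \<Rightarrow> real) \<Rightarrow> ('i \<Rightarrow> real) \<Rightarrow> ('i \<Rightarrow> real) \<Rightarrow> real" where
  "svm_dual_obj Q yt a = - (\<Sum>i\<in>UNIV. a i)
      + 1/2 * (\<Sum>i\<in>UNIV. \<Sum>j\<in>UNIV. yt i * yt j * a i * a j * Q i j)"

definition svm_dual_feasible :: "real \<Rightarrow> ('i::finite \<Rightarrow> real) \<Rightarrow> bool" where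
  "svm_dual_feasible C a \<longleftrightarrow> (\<forall>i. 0 \<le> a i \<and> a i \<le> C)"

definition svm_opt_set :: "real \<Rightarrow> ('i::finite \<Rightarrow> 'i \<Rightarrow> real) \<Rightarrow> ('i \<Rightarrow> real) \<Rightarrow> ('i \<Rightarrow> real) set" where
  "svm_opt_set C Q yt = {a. svm_dual_feasible C a \<and>
      (\<forall>b. svm_dual_feasible C b \<longrightarrow> svm_dual_obj Q yt a \<le> svm_dual_obj Q yt b)}"

definition pred_score :: "('i::finite \<Rightarrow> real) \<Rightarrow> ('i \<Rightarrow> real) \<Rightarrow> ('i \<Rightarrow> real) \<Rightarrow> real" where
  "pred_score Qt yt a = (\<Sum>i\<in>UNIV. yt i * a i * Qt i)"

definition cert_robust :: "real \<Rightarrow> ('i::finite \<Rightarrow> 'i \<Rightarrow> real) \<Rightarrow> ('i \<Rightarrow> real) \<Rightarrow> ('i \<Rightarrow> real) \<Rightarrow> real \<Rightarrow> real \<Rightarrow> bool" where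
  "cert_robust C Q Qt y eps phat \<longleftrightarrow>
     (\<forall>yt\<in>adv_set eps y. \<forall>a\<in>svm_opt_set C Q yt. sgn phat * pred_score Qt yt a > 0)"

definition bigM_u :: "real \<Rightarrow> ('i::finite \<Rightarrow> 'i \<Rightarrow> real) \<Rightarrow> 'i \<Rightarrow> real" where
  "bigM_u C Q i = (\<Sum>j\<in>UNIV. C * \<bar>Q i j\<bar>) - 1"

definition bigM_v :: "real \<Rightarrow> ('i::finite \<Rightarrow> 'i \<Rightarrow> real) \<Rightarrow> 'i \<Rightarrow> real" where
  "bigM_v C Q i = (\<Sum>j\<in>UNIV. C * \<bar>Q i j\<bar>) + 1"

definition milp_feasible ::
  "real \<Rightarrow> ('i::finite \<Rightarrow> 'i \<Rightarrow> real) \<Rightarrow> ('i \<Rightarrow> real) \<Rightarrow> real \<Rightarrow>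
   ('i \<Rightarrow> real) \<Rightarrow> ('i \<Rightarrow> real) \<Rightarrow> ('i \<Rightarrow> real) \<Rightarrow> ('i \<Rightarrow> real) \<Rightarrow> ('i \<Rightarrow> real) \<Rightarrow>
   ('i \<Rightarrow> real) \<Rightarrow> ('i \<Rightarrow> real) \<Rightarrow> ('i \<Rightarrow> real) \<Rightarrow> ('i \<Rightarrow> 'i \<Rightarrow> real) \<Rightarrow> bool" where
  "milp_feasible C Q y eps a yt z u v y' s t R \<longleftrightarrow>
     is_binary_vec y' \<and> is_binary_vec s \<and> is_binary_vec t \<and>
     (\<Sum>i\<in>UNIV. 1 - y i * yt i) \<le> 2 * real_of_int \<lfloor>eps * real (card (UNIV :: 'i set))\<rfloor> \<and>
     (\<forall>i. yt i = 2 * y' i - 1) \<and>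
     (\<forall>i. (\<Sum>j\<in>UNIV. R i j * Q i j) - 1 - u i + v i = 0) \<and>
     (\<forall>i. u i \<ge> 0 \<and> v i \<ge> 0) \<and>
     (\<forall>i j. - C * (1 + yt i) \<le> R i j + z j \<and> R i j + z j \<le> C * (1 + yt i)) \<and>
     (\<forall>i j. - C * (1 - yt i) \<le> R i j - z j \<and> R i j - z j \<le> C * (1 - yt i)) \<and>
     (\<forall>i. - a i \<le> z i \<and> z i \<le> a i) \<and>
     (\<forall>i. a i - C * (1 - yt i) \<le> z i \<and> z i \<le> C * (1 + yt i) - a i) \<and>
     (\<forall>i. u i \<le> bigM_u C Q i * s i) \<and>
     (\<forall>i. a i \<le> C * (1 - s i)) \<and>
     (\<forall>i. v i \<le> bigM_v C Q i * t i) \<and>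
     (\<forall>i. a i \<ge> C * t i)"

definition milp_value :: "real \<Rightarrow> ('i::finite \<Rightarrow> 'i \<Rightarrow> real) \<Rightarrow> ('i \<Rightarrow> real) \<Rightarrow> ('i \<Rightarrow> real) \<Rightarrow> real \<Rightarrow> real \<Rightarrow> real" where
  "milp_value C Q Qt y eps phat = Inf {sgn phat * (\<Sum>i\<in>UNIV. z i * Qt i) | a yt z u v y' s t R.
      milp_feasible C Q y eps a yt z u v y' s t R}"

end

theory Submission
  imports Defs "HOL-Analysis.Analysis"
begin

text \<open>The dual D(y~) minimises a convex quadratic over the box [0,C]^m, so for a symmetric
  positive semidefinite kernel a feasible \<alpha> is optimal iff it satisfies the KKT conditions:
  the i-th partial derivative g(i) of the objective is \<le> 0 where \<alpha>(i) > 0 and \<ge> 0 where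
  \<alpha>(i) < C. The MILP P(y) encodes exactly this. Since every y~(i) is \<plusminus>1, the box
  constraints force z(i) = y~(i) \<alpha>(i) and R(i,j) = y~(i) y~(j) \<alpha>(j), so u(i) - v(i) = g(i),
  and the big-M switches s, t encode complementary slackness. Hence the objective values of
  P(y) are precisely the signed scores sgn(p) p over all attacks y~ and optimal \<alpha>. This set
  is a finite union of continuous images of compact sets, so its infimum is attained, which
  turns "all values are positive" into "the optimal value is positive".\<close>

definition svm_dual_grad :: "('i::finite \<Rightarrow> 'i \<Rightarrow> real) \<Rightarrow> ('i \<Rightarrow> real) \<Rightarrow> ('i \<Rightarrow> real) \<Rightarrow> 'i \<Rightarrow> real" where
  "svm_dual_grad Q yt a i = (\<Sum>j\<in>UNIV. yt i * yt j * Q i j * a j) - 1"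

definition svm_kkt :: "real \<Rightarrow> ('i::finite \<Rightarrow> 'i \<Rightarrow> real) \<Rightarrow> ('i \<Rightarrow> real) \<Rightarrow> ('i \<Rightarrow> real) \<Rightarrow> bool" where
  "svm_kkt C Q yt a \<longleftrightarrow> svm_dual_feasible C a \<and>
     (\<forall>i. (0 < a i \<longrightarrow> svm_dual_grad Q yt a i \<le> 0) \<and> (a i < C \<longrightarrow> svm_dual_grad Q yt a i \<ge> 0))"

subsection \<open>Optimality of the SVM dual\<close>

lemma svm_dual_obj_add:
  fixes Q :: "'i::finite \<Rightarrow> 'i \<Rightarrow> real"
  assumes sym: "\<forall>i j. Q i j = Q j i"
  shows "svm_dual_obj Q yt (\<lambda>i. a i + d i) = svm_dual_obj Q yt a
     + (\<Sum>i\<in>UNIV. d i * svm_dual_grad Q yt a i)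
     + 1/2 * (\<Sum>i\<in>UNIV. \<Sum>j\<in>UNIV. yt i * yt j * d i * d j * Q i j)"
proof -
  have expand: "(\<Sum>i\<in>UNIV. \<Sum>j\<in>UNIV. yt i * yt j * (a i + d i) * (a j + d j) * Q i j)
    = (\<Sum>i\<in>UNIV. \<Sum>j\<in>UNIV. yt i * yt j * a i * a j * Q i j)
    + (\<Sum>i\<in>UNIV. \<Sum>j\<in>UNIV. yt i * yt j * a i * d j * Q i j)
    + (\<Sum>i\<in>UNIV. \<Sum>j\<in>UNIV. yt i * yt j * d i * a j * Q i j)
    + (\<Sum>i\<in>UNIV. \<Sum>j\<in>UNIV. yt i * yt j * d i * d j * Q i j)"
    by (simp add: algebra_simps sum.distrib)
  have cross: "(\<Sum>i\<in>UNIV. \<Sum>j\<in>UNIV. yt i * yt j * a i * d j * Q i j)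
     = (\<Sum>i\<in>UNIV. \<Sum>j\<in>UNIV. yt i * yt j * d i * a j * Q i j)"
    by (subst sum.swap) (simp add: sym mult_ac)
  have grad: "(\<Sum>i\<in>UNIV. d i * svm_dual_grad Q yt a i)
     = (\<Sum>i\<in>UNIV. \<Sum>j\<in>UNIV. yt i * yt j * d i * a j * Q i j) - (\<Sum>i\<in>UNIV. d i)"
    by (simp add: svm_dual_grad_def algebra_simps sum_distrib_left sum_subtractf)
  show ?thesis
    unfolding svm_dual_obj_def expand cross grad by (simp add: sum.distrib algebra_simps)
qed

lemma svm_dual_obj_add_coordinate:
  fixes Q :: "'i::finite \<Rightarrow> 'i \<Rightarrow> real"
  assumes sym: "\<forall>i j. Q i j = Q j i"
  shows "svm_dual_obj Q yt (\<lambda>j. a j + (if j = i then c else 0))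
     = svm_dual_obj Q yt a + c * svm_dual_grad Q yt a i + 1/2 * c^2 * (yt i * yt i * Q i i)"
proof -
  have "(\<Sum>j\<in>UNIV. (if j = i then c else 0) * svm_dual_grad Q yt a j)
      = (\<Sum>j\<in>UNIV. if j = i then c * svm_dual_grad Q yt a j else 0)"
    by (intro sum.cong) auto
  hence lin: "(\<Sum>j\<in>UNIV. (if j = i then c else 0) * svm_dual_grad Q yt a j) = c * svm_dual_grad Q yt a i"
    by simp
  have "(\<Sum>j\<in>UNIV. yt k * yt j * (if k = i then c else 0) * (if j = i then c else 0) * Q k j)
      = (\<Sum>j\<in>UNIV. if j = i then (if k = i then yt i * yt i * c * c * Q i i else 0) else 0)" for k
    by (intro sum.cong) auto
  hence quad: "(\<Sum>k\<in>UNIV. \<Sum>j\<in>UNIV. yt k * yt j * (if k = i then c else 0) * (if j = i then c else 0) * Q k j)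
     = c^2 * (yt i * yt i * Q i i)"
    by (simp add: power2_eq_square mult_ac)
  show ?thesis unfolding svm_dual_obj_add[OF sym] lin quad by simp
qed

lemma nonneg_of_quadratic_nonneg_near_zero:
  fixes g h D :: real
  assumes "D > 0" and quad: "\<And>\<delta>. 0 < \<delta> \<Longrightarrow> \<delta> \<le> D \<Longrightarrow> 0 \<le> \<delta> * g + 1/2 * \<delta>^2 * h"
  shows "g \<ge> 0"
proof (rule ccontr)
  assume "\<not> g \<ge> 0"
  hence g: "g < 0" by simp
  define \<delta> where "\<delta> = min D (-g / (\<bar>h\<bar> + 1))"
  have "-g / (\<bar>h\<bar> + 1) > 0" using g by (intro divide_pos_pos) auto
  hence \<delta>_pos: "0 < \<delta>" using assms(1) by (simp add: \<delta>_def)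
  have "\<delta> \<le> -g / (\<bar>h\<bar> + 1)" by (simp add: \<delta>_def)
  hence "\<delta> * (\<bar>h\<bar> + 1) \<le> -g" by (simp add: field_simps)
  hence "\<delta> * \<bar>h\<bar> < -g" using \<delta>_pos by (simp add: algebra_simps)
  moreover have "\<delta> * h \<le> \<delta> * \<bar>h\<bar>" using \<delta>_pos by (simp add: mult_left_mono)
  ultimately have "g + 1/2 * \<delta> * h < 0" using g by linarith
  hence "\<delta> * (g + 1/2 * \<delta> * h) < 0" using \<delta>_pos by (simp add: mult_pos_neg)
  moreover have "0 \<le> \<delta> * g + 1/2 * \<delta>^2 * h" using quad \<delta>_pos by (simp add: \<delta>_def)
  ultimately show False by (simp add: algebra_simps power2_eq_square)
qed

lemma svm_kkt_if_opt:
  fixes Q :: "'i::finite \<Rightarrow> 'i \<Rightarrow> real"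
  assumes sym: "\<forall>i j. Q i j = Q j i" and a: "a \<in> svm_opt_set C Q yt"
  shows "svm_kkt C Q yt a"
proof -
  have feas: "svm_dual_feasible C a"
    and opt: "\<And>b. svm_dual_feasible C b \<Longrightarrow> svm_dual_obj Q yt a \<le> svm_dual_obj Q yt b"
    using a by (auto simp: svm_opt_set_def)
  have a_box: "0 \<le> a i" "a i \<le> C" for i using feas by (auto simp: svm_dual_feasible_def)
  have step: "0 \<le> c * svm_dual_grad Q yt a i + 1/2 * c^2 * (yt i * yt i * Q i i)"
    if "0 \<le> a i + c" "a i + c \<le> C" for i c
  proof -
    have "svm_dual_feasible C (\<lambda>j. a j + (if j = i then c else 0))"
      using feas that by (auto simp: svm_dual_feasible_def)
    from opt[OF this] show ?thesis unfolding svm_dual_obj_add_coordinate[OF sym] by simp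
  qed
  have "svm_dual_grad Q yt a i \<le> 0" if "0 < a i" for i
  proof -
    have "- svm_dual_grad Q yt a i \<ge> 0"
    proof (rule nonneg_of_quadratic_nonneg_near_zero[OF that])
      fix \<delta> :: real assume "0 < \<delta>" "\<delta> \<le> a i"
      thus "0 \<le> \<delta> * - svm_dual_grad Q yt a i + 1/2 * \<delta>^2 * (yt i * yt i * Q i i)"
        using step[of i "- \<delta>"] a_box[of i] by simp
    qed
    thus ?thesis by simp
  qed
  moreover have "svm_dual_grad Q yt a i \<ge> 0" if "a i < C" for i
    by (rule nonneg_of_quadratic_nonneg_near_zero[of "C - a i" _ "yt i * yt i * Q i i"])
      (use that step[of i] a_box[of i] in auto)
  ultimately show ?thesis using feas by (simp add: svm_kkt_def)
qed

lemma svm_opt_if_kkt: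
  fixes Q :: "'i::finite \<Rightarrow> 'i \<Rightarrow> real"
  assumes sym: "\<forall>i j. Q i j = Q j i"
    and psd: "\<forall>x::'i \<Rightarrow> real. (\<Sum>i\<in>UNIV. \<Sum>j\<in>UNIV. x i * Q i j * x j) \<ge> 0"
    and kkt: "svm_kkt C Q yt a"
  shows "a \<in> svm_opt_set C Q yt"
proof -
  have feas: "svm_dual_feasible C a" using kkt by (simp add: svm_kkt_def)
  have "svm_dual_obj Q yt a \<le> svm_dual_obj Q yt b" if feas_b: "svm_dual_feasible C b" for b
  proof -
    define d where "d = (\<lambda>i. b i - a i)"
    have linear: "0 \<le> (\<Sum>i\<in>UNIV. d i * svm_dual_grad Q yt a i)"
    proof (rule sum_nonneg)
      fix i
      have box: "0 \<le> a i" "a i \<le> C" "0 \<le> b i" "b i \<le> C"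
        using feas feas_b by (auto simp: svm_dual_feasible_def)
      have "\<not> a i < C" if "svm_dual_grad Q yt a i < 0"
        using kkt that by (auto simp: svm_kkt_def)
      moreover have "\<not> 0 < a i" if "svm_dual_grad Q yt a i > 0"
        using kkt that by (auto simp: svm_kkt_def)
      ultimately show "0 \<le> d i * svm_dual_grad Q yt a i"
        using box unfolding d_def
        by (cases "svm_dual_grad Q yt a i" "0::real" rule: linorder_cases)
          (auto intro: mult_nonpos_nonpos)
    qed
    have "(\<Sum>i\<in>UNIV. \<Sum>j\<in>UNIV. yt i * yt j * d i * d j * Q i j)
       = (\<Sum>i\<in>UNIV. \<Sum>j\<in>UNIV. (yt i * d i) * Q i j * (yt j * d j))"
      by (simp add: mult_ac)
    hence quadratic: "0 \<le> (\<Sum>i\<in>UNIV. \<Sum>j\<in>UNIV. yt i * yt j * d i * d j * Q i j)"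
      using psd by simp
    have "svm_dual_obj Q yt b = svm_dual_obj Q yt a + (\<Sum>i\<in>UNIV. d i * svm_dual_grad Q yt a i)
       + 1/2 * (\<Sum>i\<in>UNIV. \<Sum>j\<in>UNIV. yt i * yt j * d i * d j * Q i j)"
      using svm_dual_obj_add[OF sym, of yt a d] by (simp add: d_def)
    thus ?thesis using linear quadratic by simp
  qed
  thus ?thesis using feas by (auto simp: svm_opt_set_def)
qed

subsection \<open>Label vectors and the attack budget\<close>

lemma label_vec_cases: "is_label_vec yt \<Longrightarrow> yt i = 1 \<or> yt i = -1"
  by (auto simp: is_label_vec_def)

lemma sum_label_mismatch:
  assumes "is_label_vec (y::'i::finite \<Rightarrow> real)" "is_label_vec yt"
  shows "(\<Sum>i\<in>UNIV. 1 - y i * yt i) = 2 * real (card {i. yt i \<noteq> y i})"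
proof -
  have "(\<Sum>i\<in>UNIV. 1 - y i * yt i) = (\<Sum>i\<in>UNIV. if yt i \<noteq> y i then 2 else 0)"
  proof (rule sum.cong)
    fix i
    show "1 - y i * yt i = (if yt i \<noteq> y i then 2 else 0)"
      using label_vec_cases[OF assms(1), of i] label_vec_cases[OF assms(2), of i] by auto
  qed simp
  also have "\<dots> = (\<Sum>i\<in>{i\<in>UNIV. yt i \<noteq> y i}. 2)"
    by (rule sum.inter_filter[symmetric]) simp
  finally show ?thesis by simp
qed

lemma adv_set_iff_budget:
  assumes "is_label_vec (y::'i::finite \<Rightarrow> real)" "is_label_vec yt"
  shows "yt \<in> adv_set eps y \<longleftrightarrow>
     (\<Sum>i\<in>UNIV. 1 - y i * yt i) \<le> 2 * real_of_int \<lfloor>eps * real (card (UNIV :: 'i set))\<rfloor>"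
  using assms unfolding adv_set_def sum_label_mismatch[OF assms]
  by (simp del: of_int_le_iff add: of_int_le_iff[symmetric, where 'a=real])

lemma finite_adv_set: "finite (adv_set eps (y::'i::finite \<Rightarrow> real))"
proof (rule finite_subset)
  show "adv_set eps y \<subseteq> PiE (UNIV::'i set) (\<lambda>_. {-1, 1::real})"
    by (auto simp: adv_set_def is_label_vec_def PiE_UNIV_domain)
qed (intro finite_PiE, auto)

subsection \<open>The MILP encoding\<close>

lemma abs_svm_dual_grad_plus_one_le:
  fixes Q :: "'i::finite \<Rightarrow> 'i \<Rightarrow> real"
  assumes "is_label_vec yt" "svm_dual_feasible C a"
  shows "\<bar>svm_dual_grad Q yt a i + 1\<bar> \<le> (\<Sum>j\<in>UNIV. C * \<bar>Q i j\<bar>)"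
proof -
  have "\<bar>svm_dual_grad Q yt a i + 1\<bar> \<le> (\<Sum>j\<in>UNIV. \<bar>yt i * yt j * Q i j * a j\<bar>)"
    unfolding svm_dual_grad_def by (simp add: sum_abs)
  also have "\<dots> \<le> (\<Sum>j\<in>UNIV. C * \<bar>Q i j\<bar>)"
  proof (rule sum_mono)
    fix j
    have "\<bar>yt i\<bar> = 1" "\<bar>yt j\<bar> = 1"
      using label_vec_cases[OF assms(1), of i] label_vec_cases[OF assms(1), of j] by auto
    moreover have "0 \<le> a j" "a j \<le> C" using assms(2) by (auto simp: svm_dual_feasible_def)
    ultimately show "\<bar>yt i * yt j * Q i j * a j\<bar> \<le> C * \<bar>Q i j\<bar>"
      by (simp add: abs_mult mult.commute mult_right_mono)
  qed
  finally show ?thesis .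
qed

lemma svm_kkt_slacks_le_bigM:
  fixes Q :: "'i::finite \<Rightarrow> 'i \<Rightarrow> real"
  assumes C: "C > 0" and lab: "is_label_vec yt" and kkt: "svm_kkt C Q yt a"
  shows "max (svm_dual_grad Q yt a i) 0 \<le> bigM_u C Q i * (if a i = 0 then 1 else 0)"
    and "max (- svm_dual_grad Q yt a i) 0 \<le> bigM_v C Q i * (if a i = C then 1 else 0)"
proof -
  have feas: "svm_dual_feasible C a" and a_box: "0 \<le> a i" "a i \<le> C"
    and kkt_i: "0 < a i \<Longrightarrow> svm_dual_grad Q yt a i \<le> 0" "a i < C \<Longrightarrow> svm_dual_grad Q yt a i \<ge> 0"
    using kkt by (auto simp: svm_kkt_def svm_dual_feasible_def)
  note grad_bound = abs_svm_dual_grad_plus_one_le[OF lab feas, of Q i]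
  show "max (svm_dual_grad Q yt a i) 0 \<le> bigM_u C Q i * (if a i = 0 then 1 else 0)"
  proof (cases "a i = 0")
    case True
    thus ?thesis using kkt_i(2) C grad_bound by (simp add: bigM_u_def)
  next
    case False
    thus ?thesis using kkt_i(1) a_box by simp
  qed
  show "max (- svm_dual_grad Q yt a i) 0 \<le> bigM_v C Q i * (if a i = C then 1 else 0)"
  proof (cases "a i = C")
    case True
    thus ?thesis using grad_bound by (simp add: bigM_v_def)
  next
    case False
    thus ?thesis using kkt_i(2) a_box by simp
  qed
qed

lemma milp_feasible_linearization:
  assumes C: "C > 0" and F: "milp_feasible C Q y eps a yt z u v y' s t R"
  shows "is_label_vec yt" "svm_dual_feasible C a"
    "z = (\<lambda>i. yt i * a i)" "R = (\<lambda>i j. yt i * yt j * a j)"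
proof -
  note F' = F[unfolded milp_feasible_def]
  show lab: "is_label_vec yt" using F' by (auto simp: is_label_vec_def is_binary_vec_def)
  note yt_cases = label_vec_cases[OF lab]
  have z_bounds: "- a i \<le> z i" "z i \<le> a i" "a i - C * (1 - yt i) \<le> z i" "z i \<le> C * (1 + yt i) - a i"
    for i using F' by auto
  have z: "z i = yt i * a i" for i
    using yt_cases[of i] z_bounds[of i] by auto
  thus "z = (\<lambda>i. yt i * a i)" by blast
  have "0 \<le> a i \<and> a i \<le> C" for i
  proof -
    have "a i \<le> C * (1 - s i)" "s i = 0 \<or> s i = 1" using F' by (auto simp: is_binary_vec_def)
    thus ?thesis using z_bounds(1,2)[of i] C by auto
  qed
  thus "svm_dual_feasible C a" by (simp add: svm_dual_feasible_def)
  have "R i j = yt i * yt j * a j" for i j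
  proof -
    have "- C * (1 + yt i) \<le> R i j + z j" "R i j + z j \<le> C * (1 + yt i)"
      "- C * (1 - yt i) \<le> R i j - z j" "R i j - z j \<le> C * (1 - yt i)"
      using F' by auto
    thus ?thesis using yt_cases[of i] z[of j] by auto
  qed
  thus "R = (\<lambda>i j. yt i * yt j * a j)" by blast
qed

lemma milp_feasible_imp_opt:
  fixes Q :: "'i::finite \<Rightarrow> 'i \<Rightarrow> real"
  assumes C: "C > 0" and y: "is_label_vec y" and sym: "\<forall>i j. Q i j = Q j i"
    and psd: "\<forall>x::'i \<Rightarrow> real. (\<Sum>i\<in>UNIV. \<Sum>j\<in>UNIV. x i * Q i j * x j) \<ge> 0"
    and F: "milp_feasible C Q y eps a yt z u v y' s t R"
  shows "yt \<in> adv_set eps y" "a \<in> svm_opt_set C Q yt" "z = (\<lambda>i. yt i * a i)"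
proof -
  note F' = F[unfolded milp_feasible_def]
  note lin = milp_feasible_linearization[OF C F]
  have s01: "s i = 0 \<or> s i = 1" and t01: "t i = 0 \<or> t i = 1" for i
    using F' by (auto simp: is_binary_vec_def)
  have switches: "a i \<le> C * (1 - s i)" "C * t i \<le> a i" "0 \<le> u i" "0 \<le> v i"
    "u i \<le> bigM_u C Q i * s i" "v i \<le> bigM_v C Q i * t i" for i
    using F' by auto
  have grad: "svm_dual_grad Q yt a i = u i - v i" for i
  proof -
    have "(\<Sum>j\<in>UNIV. R i j * Q i j) - 1 - u i + v i = 0" using F' by blast
    moreover have "(\<Sum>j\<in>UNIV. R i j * Q i j) = (\<Sum>j\<in>UNIV. yt i * yt j * Q i j * a j)"
      by (simp add: lin(4) mult_ac)
    ultimately show ?thesis by (simp add: svm_dual_grad_def)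
  qed
  have "u i = 0" if "0 < a i" for i
  proof -
    have "s i = 0" using s01[of i] switches(1)[of i] that by auto
    thus ?thesis using switches(3,5)[of i] by simp
  qed
  moreover have "v i = 0" if "a i < C" for i
  proof -
    have "t i = 0" using t01[of i] switches(2)[of i] that by auto
    thus ?thesis using switches(4,6)[of i] by simp
  qed
  ultimately have "svm_kkt C Q yt a"
    using lin(2) switches(3,4) by (simp add: svm_kkt_def grad)
  thus "a \<in> svm_opt_set C Q yt" by (rule svm_opt_if_kkt[OF sym psd])
  show "yt \<in> adv_set eps y" using adv_set_iff_budget[OF y lin(1)] F' by auto
  show "z = (\<lambda>i. yt i * a i)" by (rule lin(3))
qed

lemma milp_feasible_if_opt:
  fixes Q :: "'i::finite \<Rightarrow> 'i \<Rightarrow> real"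
  assumes C: "C > 0" and y: "is_label_vec y" and sym: "\<forall>i j. Q i j = Q j i"
    and yt: "yt \<in> adv_set eps y" and a: "a \<in> svm_opt_set C Q yt"
  shows "\<exists>z u v y' s t R. milp_feasible C Q y eps a yt z u v y' s t R
           \<and> (\<Sum>i\<in>UNIV. z i * Qt i) = pred_score Qt yt a"
proof -
  have lab: "is_label_vec yt" using yt by (simp add: adv_set_def)
  note yt_cases = label_vec_cases[OF lab]
  have kkt: "svm_kkt C Q yt a" by (rule svm_kkt_if_opt[OF sym a])
  have a_box: "0 \<le> a i" "a i \<le> C" for i using kkt by (auto simp: svm_kkt_def svm_dual_feasible_def)
  define u where "u = (\<lambda>i. max (svm_dual_grad Q yt a i) 0)"
  define v where "v = (\<lambda>i. max (- svm_dual_grad Q yt a i) 0)"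
  define y' where "y' = (\<lambda>i. (yt i + 1) / 2)"
  define s where "s = (\<lambda>i. if a i = 0 then 1 else (0::real))"
  define t where "t = (\<lambda>i. if a i = C then 1 else (0::real))"
  define R where "R = (\<lambda>i j. yt i * yt j * a j)"
  define z where "z = (\<lambda>i. yt i * a i)"
  have "milp_feasible C Q y eps a yt z u v y' s t R"
    unfolding milp_feasible_def z_def
  proof (intro conjI allI)
    show "is_binary_vec y'" unfolding is_binary_vec_def y'_def
    proof
      fix i show "(yt i + 1) / 2 = 0 \<or> (yt i + 1) / 2 = 1" using yt_cases[of i] by auto
    qed
    show "is_binary_vec s" "is_binary_vec t" by (auto simp: is_binary_vec_def s_def t_def)
    show "(\<Sum>i\<in>UNIV. 1 - y i * yt i) \<le> 2 * real_of_int \<lfloor>eps * real CARD('i)\<rfloor>"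
      using adv_set_iff_budget[OF y lab] yt by simp
    fix i
    show "yt i = 2 * y' i - 1" by (simp add: y'_def field_simps)
    have "(\<Sum>j\<in>UNIV. R i j * Q i j) = (\<Sum>j\<in>UNIV. yt i * yt j * Q i j * a j)"
      by (simp add: R_def mult_ac)
    thus "(\<Sum>j\<in>UNIV. R i j * Q i j) - 1 - u i + v i = 0"
      by (simp add: svm_dual_grad_def u_def v_def)
    show "0 \<le> u i" "0 \<le> v i" by (auto simp: u_def v_def)
    show "- a i \<le> yt i * a i" "yt i * a i \<le> a i"
      "a i - C * (1 - yt i) \<le> yt i * a i" "yt i * a i \<le> C * (1 + yt i) - a i"
      using yt_cases[of i] a_box[of i] by auto
    show "u i \<le> bigM_u C Q i * s i" "v i \<le> bigM_v C Q i * t i"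
      unfolding u_def v_def s_def t_def by (rule svm_kkt_slacks_le_bigM[OF C lab kkt])+
    show "a i \<le> C * (1 - s i)" "C * t i \<le> a i" using a_box[of i] by (auto simp: s_def t_def)
    fix j
    show "- C * (1 + yt i) \<le> R i j + yt j * a j" "R i j + yt j * a j \<le> C * (1 + yt i)"
      "- C * (1 - yt i) \<le> R i j - yt j * a j" "R i j - yt j * a j \<le> C * (1 - yt i)"
      using yt_cases[of i] yt_cases[of j] a_box[of j] by (auto simp: R_def)
  qed
  moreover have "(\<Sum>i\<in>UNIV. z i * Qt i) = pred_score Qt yt a"
    by (simp add: z_def pred_score_def)
  ultimately show ?thesis by blast
qed

lemma milp_objective_values_eq:
  fixes Q :: "'i::finite \<Rightarrow> 'i \<Rightarrow> real"
  assumes "C > 0" "is_label_vec y" "\<forall>i j. Q i j = Q j i"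
    and "\<forall>x::'i \<Rightarrow> real. (\<Sum>i\<in>UNIV. \<Sum>j\<in>UNIV. x i * Q i j * x j) \<ge> 0"
  shows "{c * (\<Sum>i\<in>UNIV. z i * Qt i) | a yt z u v y' s t R. milp_feasible C Q y eps a yt z u v y' s t R}
       = {c * pred_score Qt yt a | yt a. yt \<in> adv_set eps y \<and> a \<in> svm_opt_set C Q yt}"
  (is "?milp = ?attacks")
proof
  show "?milp \<subseteq> ?attacks"
    using milp_feasible_imp_opt[OF assms] by (fastforce simp: pred_score_def)
  show "?attacks \<subseteq> ?milp"
  proof
    fix x assume "x \<in> ?attacks"
    then obtain yt a where "yt \<in> adv_set eps y" "a \<in> svm_opt_set C Q yt"
      and x: "x = c * pred_score Qt yt a" by blast
    with milp_feasible_if_opt[OF assms(1-3)] obtain z u v y' s t R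
      where "milp_feasible C Q y eps a yt z u v y' s t R"
        and "(\<Sum>i\<in>UNIV. z i * Qt i) = pred_score Qt yt a" by blast
    with x have "x = c * (\<Sum>i\<in>UNIV. z i * Qt i) \<and> milp_feasible C Q y eps a yt z u v y' s t R"
      by simp
    thus "x \<in> ?milp" by blast
  qed
qed

subsection \<open>Attainment of the optimum\<close>

lemma continuous_on_coordinate [continuous_intros]:
  "continuous_on S (\<lambda>x::'i \<Rightarrow> real. x i)"
  by (rule continuous_on_subset[OF continuous_on_product_coordinates]) simp

lemma compact_svm_opt_set: "compact (svm_opt_set C (Q::'i::finite \<Rightarrow> 'i \<Rightarrow> real) yt)"
proof -
  define K where "K = PiE (UNIV::'i set) (\<lambda>_. {0..C})"
  have "compactin (product_topology (\<lambda>_. euclidean) UNIV) K"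
    unfolding K_def compactin_PiE by simp
  hence "compact K" by (simp add: euclidean_product_topology)
  have "svm_dual_feasible C a \<longleftrightarrow> a \<in> K" for a
    by (auto simp: K_def svm_dual_feasible_def PiE_UNIV_domain)
  hence "svm_opt_set C Q yt = K \<inter> (\<Inter>b\<in>K. {a. svm_dual_obj Q yt a \<le> svm_dual_obj Q yt b})"
    by (auto simp: svm_opt_set_def)
  moreover have "closed (\<Inter>b\<in>K. {a. svm_dual_obj Q yt a \<le> svm_dual_obj Q yt b})"
    unfolding svm_dual_obj_def by (intro closed_INT ballI closed_Collect_le continuous_intros)
  ultimately show ?thesis using \<open>compact K\<close> by (simp add: compact_Int_closed)
qed

lemma compact_attack_values:
  "compact {c * pred_score Qt yt a | yt a. yt \<in> adv_set eps (y::'i::finite \<Rightarrow> real) \<and> a \<in> svm_opt_set C Q yt}"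
proof -
  have "{c * pred_score Qt yt a | yt a. yt \<in> adv_set eps y \<and> a \<in> svm_opt_set C Q yt}
      = (\<Union>yt\<in>adv_set eps y. (\<lambda>a. c * pred_score Qt yt a) ` svm_opt_set C Q yt)"
    by blast
  moreover have "compact ((\<lambda>a. c * pred_score Qt yt a) ` svm_opt_set C Q yt)" for yt
    unfolding pred_score_def by (intro compact_continuous_image compact_svm_opt_set continuous_intros)
  ultimately show ?thesis by (simp add: compact_UN finite_adv_set)
qed

lemma compact_all_pos_iff_Inf_pos:
  fixes S :: "real set"
  assumes "compact S" "S \<noteq> {}"
  shows "(\<forall>x\<in>S. x > 0) \<longleftrightarrow> Inf S > 0"
proof -
  have bdd: "bdd_below S" using assms(1) by (intro bounded_imp_bdd_below compact_imp_bounded)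
  have "Inf S \<in> S" using closed_contains_Inf[OF assms(2) bdd compact_imp_closed[OF assms(1)]] .
  thus ?thesis using cInf_lower[OF _ bdd] by (meson less_le_trans)
qed

theorem theorem1:
  fixes C eps :: real
    and y Qt astar :: "'i::finite \<Rightarrow> real"
    and Q :: "'i \<Rightarrow> 'i \<Rightarrow> real"
  assumes "C > 0"
    and "0 \<le> eps" and "eps \<le> 1"
    and "is_label_vec y"
    and "\<forall>i j. Q i j = Q j i"
    and "\<forall>x::'i \<Rightarrow> real. (\<Sum>i\<in>UNIV. \<Sum>j\<in>UNIV. x i * Q i j * x j) \<ge> 0"
    and "astar \<in> svm_opt_set C Q y"
    and "pred_score Qt y astar \<noteq> 0"
  shows "(cert_robust C Q Qt y eps (pred_score Qt y astar)
            \<longleftrightarrow> milp_value C Q Qt y eps (pred_score Qt y astar) > 0)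
       \<and> milp_value C Q Qt y eps (pred_score Qt y astar)
           = Inf {sgn (pred_score Qt y astar) * pred_score Qt yt a | yt a.
                    yt \<in> adv_set eps y \<and> a \<in> svm_opt_set C Q yt}"
proof -
  define p where "p = pred_score Qt y astar"
  define V where "V = {sgn p * pred_score Qt yt a | yt a. yt \<in> adv_set eps y \<and> a \<in> svm_opt_set C Q yt}"
  have optimal_value: "milp_value C Q Qt y eps p = Inf V"
    unfolding milp_value_def V_def milp_objective_values_eq[OF assms(1,4-6)] ..
  have "y \<in> adv_set eps y" using assms(2,4) by (simp add: adv_set_def)
  hence "V \<noteq> {}" using assms(7) unfolding V_def by blast
  moreover have "compact V" unfolding V_def by (rule compact_attack_values)
  moreover have "cert_robust C Q Qt y eps p \<longleftrightarrow> (\<forall>x\<in>V. x > 0)"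
    unfolding cert_robust_def V_def by blast
  ultimately have "cert_robust C Q Qt y eps p \<longleftrightarrow> Inf V > 0"
    by (simp add: compact_all_pos_iff_Inf_pos)
  with optimal_value show ?thesis unfolding p_def V_def by simp
qed

end
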